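(* The abelian group $\ell^\infty(\mathbb{Z})_S$ is divisible: for every $a\in\ell^\infty(\mathbb{Z})$ and every integer $n\ge1$ there exist $b,c\in\ell^\infty(\mathbb{Z})$ with $a-nb=c-Sc$.
   Context: $\ell^\infty(\mathbb{Z})$ denotes the abelian group of bounded integer-valued sequences $(a_j)_{j\in\mathbb{Z}}$, $S(a_j)_j=(a_{j+1})_j$ is the shift, and $\ell^\infty(\mathbb{Z})_S=\ell^\infty(\mathbb{Z})/\{a-Sa: a\in\ell^\infty(\mathbb{Z})\}$. *)

theory Defs
  imports Main
begin

definition linfZ :: "(int \<Rightarrow> int) set" where
  "linfZ = {a. \<exists>M. \<forall>j. \<bar>a j\<bar> \<le> M}"

definition shiftZ :: "(int \<Rightarrow> int) \<Rightarrow> (int \<Rightarrow> int)" where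
  "shiftZ a = (\<lambda>j. a (j + 1))"

end

theory Submission
  imports Defs
begin

text \<open>Let \<open>P\<close> be a discrete antiderivative of \<open>a\<close>, i.e. \<open>P (j + 1) - P j = a j\<close>. Its residues
  \<open>c = (- P) mod n\<close> form a bounded sequence with \<open>c - S c \<equiv> - a\<close> modulo \<open>n\<close>, so \<open>a - c + S c = n b\<close>
  for an integer sequence \<open>b\<close>, which is bounded because \<open>a\<close> and \<open>c\<close> are.\<close>

definition antidiff :: "(int \<Rightarrow> 'a::ab_group_add) \<Rightarrow> int \<Rightarrow> 'a" where
  "antidiff a j = sum a {0..<j} - sum a {j..<0}"

lemma antidiff_succ: "antidiff a (j + 1) = antidiff a j + a j"
proof (cases "j \<ge> 0")
  case True
  then have "{0..<j + 1} = insert j {0..<j}" "{j + 1..<0} = {}" "{j..<0} = {}"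
    by auto
  then show ?thesis by (simp add: antidiff_def)
next
  case False
  then have "{0..<j + 1} = {}" "{0..<j} = {}" "{j..<0} = insert j {j + 1..<0}"
    by auto
  then show ?thesis by (simp add: antidiff_def)
qed

lemma linfZ_iff: "x \<in> linfZ \<longleftrightarrow> (\<exists>M. \<forall>j. \<bar>x j\<bar> \<le> M)"
  by (simp add: linfZ_def)

lemma linfZ_mod:
  assumes "n > 0"
  shows "(\<lambda>j. f j mod n) \<in> linfZ"
  using assms by (auto simp: linfZ_iff intro!: exI[of _ n] less_imp_le)

lemma linfZ_add_diff_shift:
  assumes "x \<in> linfZ" and "y \<in> linfZ"
  shows "(\<lambda>j. x j - y j + shiftZ y j) \<in> linfZ"
proof -
  obtain M N where M: "\<And>j. \<bar>x j\<bar> \<le> M" and N: "\<And>j. \<bar>y j\<bar> \<le> N"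
    using assms by (auto simp: linfZ_iff)
  have "\<bar>x j - y j + shiftZ y j\<bar> \<le> M + 2 * N" for j
    using M[of j] N[of j] N[of "j + 1"] unfolding shiftZ_def by linarith
  then show ?thesis by (auto simp: linfZ_iff)
qed

lemma linfZ_div_exact:
  assumes "x \<in> linfZ" and "n \<ge> 1" and "\<And>j. n dvd x j"
  shows "(\<lambda>j. x j div n) \<in> linfZ"
proof -
  obtain M where M: "\<And>j. \<bar>x j\<bar> \<le> M" using assms(1) by (auto simp: linfZ_iff)
  have "\<bar>x j div n\<bar> \<le> M" for j
  proof -
    have "\<bar>x j div n\<bar> \<le> \<bar>n * (x j div n)\<bar>"
      using assms(2) by (simp add: abs_mult mult_le_cancel_right1)
    also have "n * (x j div n) = x j"
      using assms(3) by simp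
    finally show ?thesis using M[of j] by linarith
  qed
  then show ?thesis by (auto simp: linfZ_iff)
qed

theorem lemma5p1:
  fixes a :: "int \<Rightarrow> int" and n :: int
  assumes "a \<in> linfZ" and "n \<ge> 1"
  shows "\<exists>b \<in> linfZ. \<exists>c \<in> linfZ. (\<lambda>j. a j - n * b j) = (\<lambda>j. c j - shiftZ c j)"
proof -
  define c where "c = (\<lambda>j. (- antidiff a j) mod n)"
  define b where "b = (\<lambda>j. (a j - c j + shiftZ c j) div n)"
  have c_bounded: "c \<in> linfZ"
    unfolding c_def using assms(2) by (intro linfZ_mod) simp
  have dvd: "n dvd a j - c j + shiftZ c j" for j
  proof -
    have "a j - c j + shiftZ c j = (- antidiff a j - c j) - (- antidiff a (j + 1) - c (j + 1))"
      using antidiff_succ[of a j] by (simp add: shiftZ_def)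
    moreover have "n dvd (- antidiff a j - c j) - (- antidiff a (j + 1) - c (j + 1))"
      unfolding c_def by (intro dvd_diff dvd_minus_mod)
    ultimately show ?thesis by (simp only:)
  qed
  then have "(\<lambda>j. a j - n * b j) = (\<lambda>j. c j - shiftZ c j)"
    by (simp add: b_def)
  moreover have "b \<in> linfZ"
    unfolding b_def using linfZ_add_diff_shift[OF assms(1) c_bounded] assms(2) dvd
    by (rule linfZ_div_exact)
  ultimately show ?thesis using c_bounded by blast
qed

end
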